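(* There exist unitary matrices $A_n,B_n\in\mathrm U(6n)$, $n\in\mathbb N$, such that $\|B_n^{-1}A_n^2B_n-A_n^3\|_{\mathrm{Frob}}=O_{\mathcal U}(1/n)$ and $\|A_nB_n^{-1}A_nB_n-B_n^{-1}A_nB_nA_n\|_{\mathrm{Frob}}=\sqrt{6n}-O_{\mathcal U}(1)$.
   Context: $\|T\|_{\mathrm{Frob}}=\sqrt{\sum_{i,j}|T_{ij}|^2}$. Fix a non-principal ultrafilter $\mathcal U$ on $\mathbb N$. For sequences of non-negative reals, $x_n=O_{\mathcal U}(y_n)$ means there is $C>0$ with $\{n: x_n\le Cy_n\}\in\mathcal U$; "$x_n=\sqrt{6n}-O_{\mathcal U}(1)$" means $|x_n-\sqrt{6n}|=O_{\mathcal U}(1)$ in this sense. *)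

theory Defs
  imports Complex_Main "Jordan_Normal_Form.Matrix"
begin

definition cadj :: "complex mat \<Rightarrow> complex mat" where
  "cadj A = mat (dim_col A) (dim_row A) (\<lambda>(i,j). cnj (A $$ (j,i)))"

definition unitary_mat :: "nat \<Rightarrow> complex mat \<Rightarrow> bool" where
  "unitary_mat k U \<longleftrightarrow> U \<in> carrier_mat k k \<and> U * cadj U = 1\<^sub>m k \<and> cadj U * U = 1\<^sub>m k"

definition mat_inv :: "complex mat \<Rightarrow> complex mat" where
  "mat_inv B = (THE C. C \<in> carrier_mat (dim_row B) (dim_row B) \<and> inverts_mat B C \<and> inverts_mat C B)"

definition frob :: "complex mat \<Rightarrow> real" where
  "frob T = sqrt (\<Sum>i<dim_row T. \<Sum>j<dim_col T. (cmod (T $$ (i,j)))^2)"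

text \<open>Ultrafilters on nat, represented as Isabelle filters; membership of a set S
  in the ultrafilter U is  eventually (\<lambda>n. n \<in> S) U.\<close>
definition is_ultrafilter :: "nat filter \<Rightarrow> bool" where
  "is_ultrafilter U \<longleftrightarrow> U \<noteq> bot \<and> (\<forall>P. eventually P U \<or> eventually (\<lambda>n. \<not> P n) U)"

definition nonprincipal :: "nat filter \<Rightarrow> bool" where
  "nonprincipal U \<longleftrightarrow> (\<forall>m. U \<noteq> principal {m})"

definition bigO_U :: "nat filter \<Rightarrow> (nat \<Rightarrow> real) \<Rightarrow> (nat \<Rightarrow> real) \<Rightarrow> bool" where
  "bigO_U U x y \<longleftrightarrow> (\<exists>C>0. eventually (\<lambda>n. x n \<le> C * y n) U)"

end

(*
  Let q = 3^L - 2^L and D = L 2^L. Index a basis by pairs (w, j) of an L-bit word w and a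
  position j modulo L, and give (w, j) the phase v(w, j) = sum of weight (j - k) over the set
  bits k of w, where weight m = 3^(m-1) / 2^m modulo q; since 3^L = 2^L modulo q, this is
  well defined for m modulo L, and 2 v(w, j + 1) = 3 v(w, j) modulo q. So for the diagonal matrix A
  of the q-th roots of unity exp(2 pi i v / q) and the permutation P shifting j, the relation
  P^-1 A^2 P = A^3 holds exactly.

  B = P R^* additionally rotates each plane spanned by (w, j) and (w with bit j flipped, j).
  The eigenvalues of A^3 at such a pair differ only by a factor exp(2 pi i / q), so the
  relation is violated by O(sqrt D / q) = O(1 / D), which is O(1/n) once D is about 6n. The eigenvalues of A and
  of P^-1 A P at such a pair differ by constants (about 3 and 4 in squared modulus), so the
  commutator of A and B^-1 A B has Frobenius norm of order sqrt D times the rotation angle;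
  the angle is chosen to make it exactly sqrt (6 n). Padding by the identity gives size 6n.
*)
theory Submission
  imports Defs "Jordan_Normal_Form.Determinant" "HOL-Real_Asymp.Real_Asymp"
begin

definition bs_relator_defect :: "complex mat \<Rightarrow> complex mat \<Rightarrow> real" where
  "bs_relator_defect A B = frob (mat_inv B * (A * A) * B - A * A * A)"

definition commutator_defect :: "complex mat \<Rightarrow> complex mat \<Rightarrow> real" where
  "commutator_defect A B = frob (A * mat_inv B * A * B - mat_inv B * A * B * A)"

lemma sum_eq_single:
  fixes f :: "'b \<Rightarrow> 'a::comm_monoid_add"
  assumes "finite A" "i \<in> A" "\<And>l. l \<in> A \<Longrightarrow> l \<noteq> i \<Longrightarrow> f l = 0"
  shows "sum f A = f i"
proof -
  have "sum f A = sum f {i}"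
    by (rule sum.mono_neutral_right) (use assms in auto)
  then show ?thesis by simp
qed

lemma sum_eq_pair:
  fixes f :: "'b \<Rightarrow> 'a::comm_monoid_add"
  assumes "finite A" "i \<in> A" "j \<in> A" "i \<noteq> j" "\<And>l. l \<in> A \<Longrightarrow> l \<noteq> i \<Longrightarrow> l \<noteq> j \<Longrightarrow> f l = 0"
  shows "sum f A = f i + f j"
proof -
  have "sum f A = sum f {i, j}"
    by (rule sum.mono_neutral_right) (use assms in auto)
  then show ?thesis using assms(4) by simp
qed

lemma cadj_carrier [simp]: "X \<in> carrier_mat m n \<Longrightarrow> cadj X \<in> carrier_mat n m"
  by (auto simp: cadj_def)

lemma cadj_cadj: "cadj (cadj X) = X"
  by (rule eq_matI) (auto simp: cadj_def)

lemma cadj_mult: "X \<in> carrier_mat m n \<Longrightarrow> Y \<in> carrier_mat n k \<Longrightarrow> cadj (X * Y) = cadj Y * cadj X"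
  by (intro eq_matI) (auto simp: cadj_def scalar_prod_def mult.commute)

lemma cadj_mat_diag: "cadj (mat_diag n f) = mat_diag n (\<lambda>i. cnj (f i))"
  by (rule eq_matI) (auto simp: cadj_def mat_diag_def)

lemma unitary_matI:
  assumes "X \<in> carrier_mat n n" "cadj X * X = 1\<^sub>m n"
  shows "unitary_mat n X"
  using assms mat_mult_left_right_inverse[of "cadj X" n X] by (simp add: unitary_mat_def)

lemma unitary_mat_one: "unitary_mat n (1\<^sub>m n)"
  by (rule unitary_matI) (auto simp: cadj_def)

lemma unitary_mat_mult:
  assumes X: "unitary_mat n X" and Y: "unitary_mat n Y"
  shows "unitary_mat n (X * Y)"
proof (rule unitary_matI)
  have c: "X \<in> carrier_mat n n" "Y \<in> carrier_mat n n" using X Y by (auto simp: unitary_mat_def)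
  then show "X * Y \<in> carrier_mat n n" by simp
  have "cadj (X * Y) * (X * Y) = cadj Y * (cadj X * (X * Y))"
    using c by (simp add: cadj_mult assoc_mult_mat[of _ n n _ n _ n])
  also have "\<dots> = cadj Y * ((cadj X * X) * Y)"
    using c by (simp add: assoc_mult_mat[of _ n n _ n _ n])
  finally show "cadj (X * Y) * (X * Y) = 1\<^sub>m n"
    using X Y c by (simp add: unitary_mat_def)
qed

lemma unitary_mat_diag:
  assumes "\<And>i. i < n \<Longrightarrow> cmod (f i) = 1"
  shows "unitary_mat n (mat_diag n f)"
proof (rule unitary_matI)
  have "cadj (mat_diag n f) * mat_diag n f = mat_diag n (\<lambda>i. cnj (f i) * f i)"
    by (simp add: cadj_mat_diag)
  also have "\<dots> = mat_diag n (\<lambda>_. 1)"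
    by (rule eq_matI) (auto simp: mat_diag_def assms mult.commute[of "cnj _"] complex_norm_square[symmetric])
  finally show "cadj (mat_diag n f) * mat_diag n f = 1\<^sub>m n" by simp
qed simp

lemma mat_inv_unitary:
  assumes "unitary_mat n X"
  shows "mat_inv X = cadj X"
  unfolding mat_inv_def
proof (rule the_equality)
  show "cadj X \<in> carrier_mat (dim_row X) (dim_row X) \<and> inverts_mat X (cadj X) \<and> inverts_mat (cadj X) X"
    using assms by (auto simp: unitary_mat_def inverts_mat_def cadj_def)
next
  fix C assume "C \<in> carrier_mat (dim_row X) (dim_row X) \<and> inverts_mat X C \<and> inverts_mat C X"
  then have C: "C \<in> carrier_mat n n" and CX: "C * X = 1\<^sub>m n"
    using assms by (auto simp: unitary_mat_def inverts_mat_def)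
  have X: "X \<in> carrier_mat n n" "X * cadj X = 1\<^sub>m n" using assms by (auto simp: unitary_mat_def)
  have "C = C * (X * cadj X)" using C X by simp
  also have "\<dots> = (C * X) * cadj X" using C X by (simp add: assoc_mult_mat[of _ n n _ n _ n])
  finally show "C = cadj X" using CX X(1) cadj_carrier[OF X(1)] by simp
qed

definition involution_below :: "nat \<Rightarrow> (nat \<Rightarrow> nat) \<Rightarrow> bool" where
  "involution_below N p \<longleftrightarrow> (\<forall>i<N. p i < N \<and> p (p i) = i)"

text \<open>A matrix whose row i is supported on the columns i and p i. Entries are added, so
  at a fixed point of p both d and f contribute; this makes the multiplication rule hold
  without side conditions.\<close>

definition pair_mat :: "nat \<Rightarrow> (nat \<Rightarrow> nat) \<Rightarrow> (nat \<Rightarrow> complex) \<Rightarrow> (nat \<Rightarrow> complex) \<Rightarrow> complex mat" where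
  "pair_mat N p d f = mat N N (\<lambda>(i,k). (if k = i then d i else 0) + (if k = p i then f i else 0))"

lemma pair_mat_carrier [simp]: "pair_mat N p d f \<in> carrier_mat N N"
  and pair_mat_dim [simp]: "dim_row (pair_mat N p d f) = N" "dim_col (pair_mat N p d f) = N"
  by (simp_all add: pair_mat_def)

lemma pair_mat_index:
  "i < N \<Longrightarrow> k < N \<Longrightarrow>
     pair_mat N p d f $$ (i,k) = (if k = i then d i else 0) + (if k = p i then f i else 0)"
  by (simp add: pair_mat_def)

lemma pair_mat_cong:
  "(\<And>i. i < N \<Longrightarrow> d i = d' i) \<Longrightarrow> (\<And>i. i < N \<Longrightarrow> f i = f' i) \<Longrightarrow>
     pair_mat N p d f = pair_mat N p d' f'"
  by (rule eq_matI) (auto simp: pair_mat_index)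

lemma mat_diag_eq_pair_mat: "mat_diag N d = pair_mat N p d (\<lambda>_. 0)"
  by (rule eq_matI) (auto simp: mat_diag_def pair_mat_index)

lemma pair_mat_minus:
  "pair_mat N p d f - pair_mat N p d' f' = pair_mat N p (\<lambda>i. d i - d' i) (\<lambda>i. f i - f' i)"
  by (rule eq_matI) (auto simp: pair_mat_index)

lemma pair_mat_mult:
  assumes p: "involution_below N p"
  shows "pair_mat N p d f * pair_mat N p d' f' =
     pair_mat N p (\<lambda>i. d i * d' i + f i * f' (p i)) (\<lambda>i. d i * f' i + f i * d' (p i))"
    (is "?X * ?Y = ?Z")
proof (rule eq_matI)
  fix i k assume "i < dim_row ?Z" "k < dim_col ?Z"
  then have i: "i < N" and k: "k < N" by auto
  have pi: "p i < N" "p (p i) = i" using p i by (auto simp: involution_below_def)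
  have "(?X * ?Y) $$ (i,k) = (\<Sum>l\<in>{0..<N}. ?X $$ (i,l) * ?Y $$ (l,k))"
    using i k by (simp add: scalar_prod_def)
  also have "\<dots> = ?Z $$ (i,k)"
  proof (cases "p i = i")
    case True
    then have "(\<Sum>l\<in>{0..<N}. ?X $$ (i,l) * ?Y $$ (l,k)) = ?X $$ (i,i) * ?Y $$ (i,k)"
      by (intro sum_eq_single) (use i in \<open>auto simp: pair_mat_index\<close>)
    then show ?thesis using i k True by (simp add: pair_mat_index algebra_simps)
  next
    case False
    then have "(\<Sum>l\<in>{0..<N}. ?X $$ (i,l) * ?Y $$ (l,k)) = ?X $$ (i,i) * ?Y $$ (i,k) + ?X $$ (i,p i) * ?Y $$ (p i,k)"
      by (intro sum_eq_pair) (use i pi in \<open>auto simp: pair_mat_index\<close>)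
    then show ?thesis using i k False pi by (auto simp: pair_mat_index algebra_simps)
  qed
  finally show "(?X * ?Y) $$ (i,k) = ?Z $$ (i,k)" .
qed auto

lemma cadj_pair_mat:
  assumes "involution_below N p"
  shows "cadj (pair_mat N p d f) = pair_mat N p (\<lambda>i. cnj (d i)) (\<lambda>i. cnj (f (p i)))"
  using assms unfolding cadj_def involution_below_def by (intro eq_matI) (auto simp: pair_mat_index)

lemma frob_pair_mat:
  assumes p: "involution_below N p" and f: "\<And>i. i < N \<Longrightarrow> p i = i \<Longrightarrow> f i = 0"
  shows "frob (pair_mat N p d f) = sqrt (\<Sum>i<N. (cmod (d i))^2 + (cmod (f i))^2)"
proof -
  have "(\<Sum>k<N. (cmod (pair_mat N p d f $$ (i,k)))^2) = (cmod (d i))^2 + (cmod (f i))^2"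
    if i: "i < N" for i
  proof (cases "p i = i")
    case True
    then show ?thesis using i f[OF i]
      by (subst sum_eq_single[where i = i]) (auto simp: pair_mat_index)
  next
    case False
    moreover have "p i < N" using p i by (auto simp: involution_below_def)
    ultimately show ?thesis using i
      by (subst sum_eq_pair[where i = i and j = "p i"]) (auto simp: pair_mat_index)
  qed
  then show ?thesis unfolding frob_def by simp
qed

definition perm_mat :: "nat \<Rightarrow> (nat \<Rightarrow> nat) \<Rightarrow> complex mat" where
  "perm_mat N s = mat N N (\<lambda>(i,k). if i = s k then 1 else 0)"

lemma perm_mat_carrier [simp]: "perm_mat N s \<in> carrier_mat N N"
  by (simp add: perm_mat_def)

lemma perm_mat_conj_diag:
  assumes s: "\<And>i. i < N \<Longrightarrow> s i < N" "inj_on s {0..<N}"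
  shows "cadj (perm_mat N s) * mat_diag N d * perm_mat N s = mat_diag N (\<lambda>i. d (s i))"
proof (rule eq_matI)
  fix i k assume "i < dim_row (mat_diag N (\<lambda>i. d (s i)))" "k < dim_col (mat_diag N (\<lambda>i. d (s i)))"
  then have i: "i < N" and k: "k < N" by (auto simp: mat_diag_def)
  have "cadj (perm_mat N s) * mat_diag N d = mat N N (\<lambda>(i,k). if k = s i then d k else 0)"
    by (subst mat_diag_mult_right[of _ N N]) (auto simp: cadj_def perm_mat_def)
  then have "(cadj (perm_mat N s) * mat_diag N d * perm_mat N s) $$ (i,k)
      = (\<Sum>l\<in>{0..<N}. (if l = s i then d l else 0) * (if l = s k then 1 else 0))"
    using i k by (simp add: scalar_prod_def perm_mat_def)
  also have "\<dots> = (if s i = s k then d (s i) else 0)"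
    by (subst sum_eq_single[where i = "s i"]) (use i s in auto)
  also have "\<dots> = mat_diag N (\<lambda>i. d (s i)) $$ (i,k)"
    using i k s(2) by (auto simp: mat_diag_def inj_on_def)
  finally show "(cadj (perm_mat N s) * mat_diag N d * perm_mat N s) $$ (i,k) = mat_diag N (\<lambda>i. d (s i)) $$ (i,k)" .
qed (auto simp: cadj_def perm_mat_def mat_diag_def)

lemma unitary_perm_mat:
  assumes "\<And>i. i < N \<Longrightarrow> s i < N" "inj_on s {0..<N}"
  shows "unitary_mat N (perm_mat N s)"
proof (rule unitary_matI)
  have "cadj (perm_mat N s) * 1\<^sub>m N = cadj (perm_mat N s)"
    by (rule right_mult_one_mat[of _ N]) simp
  then show "cadj (perm_mat N s) * perm_mat N s = 1\<^sub>m N"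
    using perm_mat_conj_diag[OF assms, of "\<lambda>_. 1"] by simp
qed simp

lemma cis_eq_mod:
  fixes x y q :: int
  assumes "q dvd x - y"
  shows "cis (2 * pi * x / q) = cis (2 * pi * y / q)"
proof -
  obtain k where k: "x = y + q * k" using assms by (auto simp: dvd_def algebra_simps)
  show ?thesis
  proof (cases "q = 0")
    case False
    have "2 * pi * x / q = 2 * pi * y / q + 2 * pi * k"
      using False by (simp add: k field_simps)
    then show ?thesis by (simp flip: cis_mult)
  qed (use k in simp)
qed

lemma cos_eq_mod:
  fixes x y q :: int
  assumes "q dvd x - y"
  shows "cos (2 * pi * x / q) = cos (2 * pi * y / q)"
  using arg_cong[OF cis_eq_mod[OF assms], of Re] by simp

lemma cmod_cis_diff_squared: "(cmod (cis x - cis y))^2 = 2 - 2 * cos (x - y)"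
proof -
  have "(cmod (cis x - cis y))^2 = (cos x - cos y)^2 + (sin x - sin y)^2"
    by (simp add: cmod_power2)
  also have "\<dots> = (cos x ^ 2 + sin x ^ 2) + (cos y ^ 2 + sin y ^ 2) - 2 * (cos x * cos y + sin x * sin y)"
    by (simp add: power2_eq_square algebra_simps)
  also have "\<dots> = 2 - 2 * cos (x - y)" by (simp add: cos_diff)
  finally show ?thesis .
qed

lemma two_minus_two_cos_le: "2 - 2 * cos x \<le> (x::real)^2"
proof -
  have "2 - 2 * cos x = 4 * (sin (x/2))^2"
    using cos_double_sin[of "x/2"] by simp
  also have "\<dots> \<le> 4 * (x/2)^2"
    using abs_le_square_iff[THEN iffD1, OF abs_sin_x_le_abs_x[of "x/2"]] by simp
  finally show ?thesis by (simp add: power2_eq_square)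
qed

lemma abs_cos_diff_le: "\<bar>cos x - cos y\<bar> \<le> \<bar>x - y :: real\<bar>"
proof -
  have "\<bar>cos x - cos y\<bar> = 2 * \<bar>sin ((x + y) / 2)\<bar> * \<bar>sin ((y - x) / 2)\<bar>"
    by (simp add: cos_diff_cos abs_mult)
  also have "\<dots> \<le> 2 * 1 * \<bar>(y - x) / 2\<bar>"
    by (intro mult_mono abs_sin_le_one abs_sin_x_le_abs_x) auto
  finally show ?thesis by simp
qed

text \<open>Indices i < D encode pairs (i div L, i mod L) of an L-bit word and a position
  modulo L; shift advances the position and flip toggles the bit at the position.\<close>

locale bs_phases =
  fixes L :: nat
  assumes two_le_L: "2 \<le> L"
begin

definition q :: int where "q = 3^L - 2^L"
definition half :: int where "half = (q + 1) div 2"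
definition third :: int where
  "third = (if q mod 3 = 2 then (q + 1) div 3 else (2 * q + 1) div 3)"

text \<open>Modulo q, half and third invert 2 and 3 (q is odd and prime to 3).\<close>

definition weight :: "nat \<Rightarrow> int" where "weight m = third * 3^m * half^m"

definition D :: nat where "D = L * 2^L"

definition phase :: "nat \<Rightarrow> int" where
  "phase i = (if i < D then (\<Sum>k<L. of_bool (bit (i div L) k) * weight ((i mod L + L - k) mod L)) else 0)"

definition shift :: "nat \<Rightarrow> nat" where
  "shift i = (if i < D then (i div L) * L + (i mod L + 1) mod L else i)"

definition flip :: "nat \<Rightarrow> nat" where
  "flip i = (if i < D then flip_bit (i mod L) (i div L) * L + i mod L else i)"

definition flip_sign :: "nat \<Rightarrow> int" where
  "flip_sign i = (if bit (i div L) (i mod L) then -1 else 1)"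

definition eig :: "nat \<Rightarrow> complex" where "eig i = cis (2 * pi * phase i / q)"

definition alpha :: real where "alpha = 2 - 2 * cos (2 * pi * third / q)"
definition beta :: real where "beta = 2 + 2 * cos (pi / q)"

lemma q_pos: "q > 0"
proof -
  have "(2::int)^L < 3^L" using two_le_L by (intro power_strict_mono) auto
  then show ?thesis by (simp add: q_def)
qed

lemma two_half: "2 * half = q + 1"
proof -
  have "(2::int) dvd q + 1" using two_le_L by (simp add: q_def)
  then show ?thesis unfolding half_def by (rule dvd_mult_div_cancel)
qed

lemma pow2_mod3: "(2::int)^n mod 3 = 1 \<or> (2::int)^n mod 3 = 2"
proof (induction n)
  case (Suc n)
  have "(2::int)^Suc n mod 3 = (2 * ((2::int)^n mod 3)) mod 3" by (simp add: mod_mult_right_eq)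
  with Suc show ?case by auto
qed simp

lemma q_mod3: "q mod 3 = 1 \<or> q mod 3 = 2"
proof -
  have "q = - (2^L) + 3^(L-1) * 3"
    using two_le_L by (simp add: q_def power_eq_if[of "3::int" L])
  then have "q mod 3 = (- (2^L)) mod 3" by (simp only: mod_mult_self1)
  also have "\<dots> = (- ((2::int)^L mod 3)) mod 3" by (simp only: mod_minus_eq)
  finally show ?thesis using pow2_mod3[of L] by auto
qed

lemma three_third: "3 * third = q + 1 \<or> 3 * third = 2 * q + 1"
proof (cases "q mod 3 = 2")
  case True
  then have "(3::int) dvd q + 1" by presburger
  then show ?thesis using True unfolding third_def by simp
next
  case False
  then have "(3::int) dvd 2 * q + 1" using q_mod3 by presburger
  then show ?thesis using False unfolding third_def by simp
qed

lemma q_dvd_three_third: "q dvd 3 * third - 1"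
  using three_third by auto

lemma q_dvd_weight_succ: "m < L \<Longrightarrow> q dvd 2 * weight ((m + 1) mod L) - 3 * weight m"
proof -
  assume m: "m < L"
  show ?thesis
  proof (cases "m + 1 < L")
    case True
    have "2 * weight (m + 1) - 3 * weight m = third * 3^(m+1) * half^m * (2 * half - 1)"
      by (simp add: weight_def algebra_simps)
    then show ?thesis using True two_half by simp
  next
    case False
    then have L1: "L = Suc m" using m by simp
    then have m1: "(m + 1) mod L = 0" by simp
    have pow: "q dvd (q + 1)^n - 1" for n
    proof (induction n)
      case (Suc n)
      have "(q + 1)^Suc n - 1 = (q + 1) * ((q + 1)^n - 1) + q" by (simp add: algebra_simps)
      then show ?case using Suc by simp
    qed simp
    have pow3: "(3::int)^L = 3 * 3^m" and pow2: "(2::int)^L = 2 * 2^m"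
      using L1 by simp_all
    have "3 * weight m = third * 3^L * half^m"
      by (simp add: weight_def pow3)
    also have "\<dots> = third * (q * half^m + 2 * (2 * half)^m)"
      by (simp add: q_def pow2 algebra_simps power_mult_distrib)
    also have "\<dots> = third * (q * half^m + 2 * (q + 1)^m)"
      by (simp only: two_half)
    finally have "2 * weight ((m + 1) mod L) - 3 * weight m = - third * (q * half^m + 2 * ((q + 1)^m - 1))"
      using m1 by (simp add: weight_def algebra_simps)
    moreover have "q dvd - third * (q * half^m + 2 * ((q + 1)^m - 1))"
      by (intro dvd_mult dvd_add dvd_mult2 pow) simp
    ultimately show ?thesis by simp
  qed
qed

lemma q_dvd_weight_one: "q dvd weight 1 - half"
proof -
  have "2 * (weight 1 - half) = (3 * third - 1) * (2 * half)"
    by (simp add: weight_def algebra_simps)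
  then have "2 * (weight 1 - half) = (3 * third - 1) * (q + 1)"
    by (simp only: two_half)
  then have "q dvd 2 * (weight 1 - half)" using q_dvd_three_third by simp
  moreover have "odd q" using two_le_L by (simp add: q_def)
  ultimately show ?thesis using coprime_dvd_mult_right_iff[of q 2 "weight 1 - half"] by simp
qed

lemma D_pos: "0 < D"
  using two_le_L by (simp add: D_def)

lemma index_encode_lt: "s < 2^L \<Longrightarrow> r < L \<Longrightarrow> s * L + r < D"
proof -
  assume "s < 2^L" "r < L"
  then have "s * L + r < (s + 1) * L" by simp
  also have "\<dots> \<le> 2^L * L" using \<open>s < 2^L\<close> by (intro mult_right_mono) auto
  finally show ?thesis by (simp add: D_def mult.commute)
qed

lemma index_decode: "i < D \<Longrightarrow> i div L < 2^L \<and> i mod L < L"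
  using two_le_L by (auto simp: D_def less_mult_imp_div_less mult.commute)

lemma index_encode_div [simp]: "r < L \<Longrightarrow> (s * L + r) div L = s"
  and index_encode_mod [simp]: "r < L \<Longrightarrow> (s * L + r) mod L = r"
  by simp_all

lemma flip_bit_less_two_pow: "(s::nat) < 2^L \<Longrightarrow> j < L \<Longrightarrow> flip_bit j s < 2^L"
proof -
  assume "s < 2^L" "j < L"
  then have "take_bit L s = s" by (simp add: take_bit_nat_eq_self_iff)
  then have "take_bit L (flip_bit j s) = flip_bit j s"
    using \<open>j < L\<close> by (simp add: take_bit_flip_bit_eq)
  then show ?thesis by (simp add: take_bit_nat_eq_self_iff)
qed

lemma shift_less: "i < D \<Longrightarrow> shift i < D"
  using index_decode[of i] two_le_L by (auto simp: shift_def intro!: index_encode_lt)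

lemma flip_less: "i < D \<Longrightarrow> flip i < D"
  using index_decode[of i] by (auto simp: flip_def intro!: index_encode_lt flip_bit_less_two_pow)

lemma flip_above: "\<not> i < D \<Longrightarrow> flip i = i"
  by (simp add: flip_def)

lemma flip_flip: "flip (flip i) = i"
proof (cases "i < D")
  case True
  have "flip_bit (i mod L) (flip_bit (i mod L) (i div L)) = i div L"
    by (rule bit_eqI) (auto simp: bit_flip_bit_iff)
  then show ?thesis
    using True flip_less[OF True] index_decode[OF True] by (simp add: flip_def)
qed (simp add: flip_def)

lemma flip_neq: "i < D \<Longrightarrow> flip i \<noteq> i"
proof
  assume i: "i < D" and "flip i = i"
  moreover have "flip i div L = flip_bit (i mod L) (i div L)"
    using index_decode[OF i] by (simp add: flip_def i)
  ultimately have "flip_bit (i mod L) (i div L) = i div L" by simp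
  then have "bit (flip_bit (i mod L) (i div L)) (i mod L) = bit (i div L) (i mod L)" by simp
  then show False by (simp add: bit_flip_bit_iff)
qed

lemma flip_sign_flip: "i < D \<Longrightarrow> flip_sign (flip i) = - flip_sign i"
  using index_decode[of i] by (simp add: flip_sign_def flip_def bit_flip_bit_iff)

lemma flip_sign_cases: "flip_sign i = 1 \<or> flip_sign i = -1"
  by (simp add: flip_sign_def)

lemma involution_below_flip: "D \<le> N \<Longrightarrow> involution_below N flip"
  unfolding involution_below_def
proof (intro allI impI conjI)
  fix i assume "D \<le> N" "i < N"
  then show "flip i < N" using flip_less[of i] by (cases "i < D") (auto simp: flip_def)
qed (rule flip_flip)

lemma succ_mod: "j < L \<Longrightarrow> (j + 1) mod L = (if j + 1 = L then 0 else j + 1)"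
  by (cases "j + 1 = L") auto

lemma succ_mod_inj: "j < L \<Longrightarrow> j' < L \<Longrightarrow> (j + 1) mod L = (j' + 1) mod L \<Longrightarrow> j = j'"
  using succ_mod[of j] succ_mod[of j'] by (auto split: if_splits)

lemma inj_on_shift: "inj_on shift {0..<N}"
proof (rule inj_onI)
  fix i i' assume e: "shift i = shift i'"
  show "i = i'"
  proof (cases "i < D \<and> i' < D")
    case True
    have "(i mod L + 1) mod L < L" "(i' mod L + 1) mod L < L" using two_le_L by auto
    then have "shift i div L = i div L" "shift i' div L = i' div L"
        "shift i mod L = (i mod L + 1) mod L" "shift i' mod L = (i' mod L + 1) mod L"
      using True by (simp_all add: shift_def)
    then have "i div L = i' div L \<and> (i mod L + 1) mod L = (i' mod L + 1) mod L"
      using e by metis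
    then show ?thesis
      using succ_mod_inj index_decode True by (metis div_mult_mod_eq)
  next
    case False
    then show ?thesis using e shift_less by (auto simp: shift_def split: if_splits)
  qed
qed

lemma shift_below: "D \<le> N \<Longrightarrow> i < N \<Longrightarrow> shift i < N"
  using shift_less[of i] by (cases "i < D") (auto simp: shift_def)

lemma sum_flip_bit_diff:
  fixes f :: "nat \<Rightarrow> int" and s :: nat
  assumes "j < L"
  shows "(\<Sum>k<L. of_bool (bit (flip_bit j s) k) * f k) - (\<Sum>k<L. of_bool (bit s k) * f k)
       = (if bit s j then -1 else 1) * f j"
proof -
  have "(\<Sum>k<L. of_bool (bit (flip_bit j s) k) * f k) - (\<Sum>k<L. of_bool (bit s k) * f k)
      = (\<Sum>k<L. (of_bool (bit (flip_bit j s) k) - of_bool (bit s k)) * f k)"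
    by (simp add: sum_subtractf algebra_simps)
  also have "\<dots> = (of_bool (bit (flip_bit j s) j) - of_bool (bit s j)) * f j"
    by (rule sum_eq_single) (use assms in \<open>auto simp: bit_flip_bit_iff\<close>)
  finally show ?thesis by (simp add: bit_flip_bit_iff)
qed

lemma phase_flip: "i < D \<Longrightarrow> phase (flip i) - phase i = flip_sign i * third"
  using index_decode[of i] flip_less[of i]
    sum_flip_bit_diff[of "i mod L" "i div L" "\<lambda>k. weight ((i mod L + L - k) mod L)"]
  by (simp add: phase_def flip_def flip_sign_def weight_def)

lemma succ_mod_diff: "j < L \<Longrightarrow> ((j + 1) mod L + L - j) mod L = 1"
proof -
  assume j: "j < L"
  show ?thesis
  proof (cases "j + 1 < L")
    case True
    then have "(j + 1) mod L + L - j = L + 1" by simp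
    moreover have "(L + 1) mod L = 1" using two_le_L mod_Suc_eq[of L L] by simp
    ultimately show ?thesis by simp
  next
    case False
    then have "j + 1 = L" using j by simp
    then have "(j + 1) mod L + L - j = 1" by simp
    then show ?thesis using two_le_L by simp
  qed
qed

lemma phase_shift_flip: "i < D \<Longrightarrow> phase (shift (flip i)) - phase (shift i) = flip_sign i * weight 1"
proof -
  assume i: "i < D"
  have "(i mod L + 1) mod L < L" using two_le_L by auto
  then show ?thesis
    using index_decode[OF i] flip_less[OF i] shift_less[OF i] shift_less[OF flip_less[OF i]]
      sum_flip_bit_diff[of "i mod L" "i div L" "\<lambda>k. weight (((i mod L + 1) mod L + L - k) mod L)"]
      succ_mod_diff[of "i mod L"]
    by (simp add: phase_def shift_def flip_def flip_sign_def i)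
qed

lemma succ_mod_sub: "j < L \<Longrightarrow> k < L \<Longrightarrow> ((j + 1) mod L + L - k) mod L = ((j + L - k) mod L + 1) mod L"
proof -
  assume "k < L"
  then have "((j + 1) mod L + L - k) mod L = ((j + 1) mod L + (L - k)) mod L" by simp
  also have "\<dots> = ((j + (L - k)) + 1) mod L" by (simp add: mod_add_left_eq)
  also have "\<dots> = ((j + (L - k)) mod L + 1) mod L" by (simp add: mod_Suc_eq)
  finally show ?thesis using \<open>k < L\<close> by simp
qed

lemma q_dvd_phase_shift: "q dvd 2 * phase (shift i) - 3 * phase i"
proof (cases "i < D")
  case True
  define b where "b k = (of_bool (bit (i div L) k) :: int)" for k
  define w where "w k = (i mod L + L - k) mod L" for k
  have "(i mod L + 1) mod L < L" using two_le_L by auto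
  then have "phase (shift i) = (\<Sum>k<L. b k * weight (((i mod L + 1) mod L + L - k) mod L))"
    using True shift_less[OF True] by (simp add: phase_def shift_def b_def[symmetric])
  also have "\<dots> = (\<Sum>k<L. b k * weight ((w k + 1) mod L))"
    using index_decode[OF True] succ_mod_sub[of "i mod L"] by (intro sum.cong) (simp_all add: w_def)
  finally have "phase (shift i) = (\<Sum>k<L. b k * weight ((w k + 1) mod L))" .
  moreover have "phase i = (\<Sum>k<L. b k * weight (w k))"
    using True by (simp add: phase_def b_def[symmetric] w_def)
  ultimately have "2 * phase (shift i) - 3 * phase i
      = (\<Sum>k<L. b k * (2 * weight ((w k + 1) mod L) - 3 * weight (w k)))"
    by (simp add: sum_distrib_left sum_subtractf algebra_simps)
  moreover have "q dvd \<dots>"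
    using two_le_L by (intro dvd_sum dvd_mult q_dvd_weight_succ) (simp add: w_def)
  ultimately show ?thesis by simp
qed (simp add: phase_def shift_def)

lemma cmod_eig [simp]: "cmod (eig i) = 1"
  by (simp add: eig_def)

lemma eig_power: "eig i ^ n = cis (2 * pi * of_int (int n * phase i) / q)"
  by (simp add: eig_def DeMoivre field_simps)

lemma eig_shift_squared: "eig (shift i) ^ 2 = eig i ^ 3"
proof -
  have "eig (shift i) ^ 2 = cis (2 * pi * of_int (2 * phase (shift i)) / q)"
    by (simp add: eig_power)
  also have "\<dots> = cis (2 * pi * of_int (3 * phase i) / q)"
    by (rule cis_eq_mod) (rule q_dvd_phase_shift)
  also have "\<dots> = eig i ^ 3"
    by (simp add: eig_power)
  finally show ?thesis .
qed

lemma cmod_eig_diff_squared: "(cmod (eig j - eig i))^2 = 2 - 2 * cos (2 * pi * of_int (phase j - phase i) / q)"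
  by (simp add: eig_def cmod_cis_diff_squared diff_divide_distrib algebra_simps)

lemma cmod_eig_flip_diff: "i < D \<Longrightarrow> (cmod (eig (flip i) - eig i))^2 = alpha"
  using phase_flip[of i] flip_sign_cases[of i]
  by (auto simp: cmod_eig_diff_squared alpha_def)

lemma cmod_eig_cube_flip_diff:
  assumes "i < D"
  shows "(cmod (eig (flip i) ^ 3 - eig i ^ 3))^2 = 2 - 2 * cos (2 * pi / q)"
proof -
  have "(cmod (eig (flip i) ^ 3 - eig i ^ 3))^2 = 2 - 2 * cos (2 * pi * of_int (3 * (phase (flip i) - phase i)) / q)"
    by (simp add: eig_power cmod_cis_diff_squared diff_divide_distrib algebra_simps)
  also have "cos (2 * pi * of_int (3 * (phase (flip i) - phase i)) / q) = cos (2 * pi * of_int (3 * third) / q)"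
    using phase_flip[OF assms] flip_sign_cases[of i] by auto
  also have "\<dots> = cos (2 * pi * of_int 1 / q)"
    by (rule cos_eq_mod) (rule q_dvd_three_third)
  finally show ?thesis by simp
qed

lemma cmod_eig_shift_flip_diff:
  assumes "i < D"
  shows "(cmod (eig (shift (flip i)) - eig (shift i)))^2 = beta"
proof -
  have "cos (2 * pi * of_int (phase (shift (flip i)) - phase (shift i)) / q) = cos (2 * pi * of_int (weight 1) / q)"
    using phase_shift_flip[OF assms] flip_sign_cases[of i] by auto
  also have "\<dots> = cos (2 * pi * of_int half / q)"
    by (rule cos_eq_mod) (rule q_dvd_weight_one)
  also have "2 * pi * of_int half / q = pi + pi / q"
  proof -
    have "2 * real_of_int half = q + 1" using two_half by (metis of_int_1 of_int_add of_int_mult of_int_numeral)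
    then show ?thesis using q_pos by (simp add: field_simps)
  qed
  finally show ?thesis by (simp add: cmod_eig_diff_squared beta_def)
qed

lemma q_ge_81: "5 \<le> L \<Longrightarrow> 81 \<le> q"
proof -
  assume "5 \<le> L"
  then have L1: "L = Suc (L - 1)" by simp
  have "(2::int)^(L-1) \<le> 3^(L-1)" by (intro power_mono) auto
  moreover have "(3::int)^4 \<le> 3^(L-1)" using \<open>5 \<le> L\<close> by (intro power_increasing) auto
  moreover have "q = 3 * 3^(L-1) - 2 * 2^(L-1)" unfolding q_def by (subst (1 2) L1) simp
  ultimately show ?thesis by simp
qed

text \<open>Modulo 2 pi, the angle of alpha is within 2 pi/(3 q) of 2 pi/3 or 4 pi/3.\<close>

lemma alpha_ge: "5 \<le> L \<Longrightarrow> 14/5 \<le> alpha"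
proof -
  assume "5 \<le> L"
  then have q81: "81 \<le> real_of_int q" using q_ge_81 by simp
  define d where "d = 2 * pi / (3 * q)"
  have d: "0 \<le> d" "d \<le> 2 * 4 / (3 * 81)"
    unfolding d_def using q_pos by (simp, intro frac_le) (use q81 pi_less_4 in auto)
  obtain \<phi> where \<phi>: "cos \<phi> = - (1/2)" "2 * pi * third / q = \<phi> + d"
  proof (cases "3 * third = q + 1")
    case True
    then have "3 * real_of_int third = q + 1" by (metis of_int_1 of_int_add of_int_mult of_int_numeral)
    moreover have "2 * pi * third / q = 2 * pi * (3 * real_of_int third) / (3 * q)"
      by simp
    ultimately have "2 * pi * third / q = 2 * pi * (q + 1) / (3 * q)"
      by simp
    also have "\<dots> = (pi - pi/3) + d"
      using q_pos by (simp add: d_def field_simps)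
    finally have "2 * pi * third / q = (pi - pi/3) + d" .
    then show ?thesis by (intro that[of "pi - pi/3"]) (simp only: cos_pi_minus cos_60)
  next
    case False
    then have "3 * real_of_int third = 2 * q + 1"
      using three_third by (metis of_int_1 of_int_add of_int_mult of_int_numeral)
    moreover have "2 * pi * third / q = 2 * pi * (3 * real_of_int third) / (3 * q)"
      by simp
    ultimately have "2 * pi * third / q = 2 * pi * (2 * q + 1) / (3 * q)"
      by simp
    also have "\<dots> = (pi + pi/3) + d"
      using q_pos by (simp add: d_def field_simps)
    finally have "2 * pi * third / q = (pi + pi/3) + d" .
    then show ?thesis by (intro that[of "pi + pi/3"]) (simp only: cos_periodic_pi2 cos_60)
  qed
  have "cos (2 * pi * third / q) \<le> cos \<phi> + d"
    using abs_cos_diff_le[of "\<phi> + d" \<phi>] d(1) \<phi>(2) by auto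
  then show ?thesis using \<phi>(1) d(2) unfolding alpha_def by linarith
qed

lemma beta_ge: "5 \<le> L \<Longrightarrow> 19/5 \<le> beta"
proof -
  assume "5 \<le> L"
  then have q81: "81 \<le> real_of_int q" using q_ge_81 by simp
  have d: "0 \<le> pi / q" "pi / q \<le> 4 / 81"
    using q_pos by (simp, intro frac_le) (use q81 pi_less_4 in auto)
  have "cos 0 - cos (pi / q) \<le> pi / q"
    using abs_cos_diff_le[of 0 "pi / q"] d(1) by simp
  then show ?thesis using d(2) unfolding beta_def by simp
qed

lemma cube_flip_gap_le: "2 - 2 * cos (2 * pi / q) \<le> (8 / q)^2"
proof -
  have "2 - 2 * cos (2 * pi / q) \<le> (2 * pi / q)^2" by (rule two_minus_two_cos_le)
  also have "\<dots> \<le> (8 / q)^2"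
    using q_pos pi_less_4 by (intro power_mono divide_right_mono) auto
  finally show ?thesis .
qed

end

locale bs_matrices = bs_phases +
  fixes N :: nat and c s :: real
  assumes D_le_N: "D \<le> N" and cos_sin: "c^2 + s^2 = 1"
begin

text \<open>R rotates each coordinate plane spanned by i and flip i (i < D) by the angle with
  cosine c and sine s.\<close>

definition rot_diag :: "nat \<Rightarrow> complex" where
  "rot_diag i = (if i < D then of_real c else 1)"

definition rot_off :: "nat \<Rightarrow> complex" where
  "rot_off i = (if i < D then of_int (flip_sign i) * of_real s else 0)"

definition R :: "complex mat" where "R = pair_mat N flip rot_diag rot_off"
definition A :: "complex mat" where "A = mat_diag N eig"
definition P :: "complex mat" where "P = perm_mat N shift"
definition B :: "complex mat" where "B = P * cadj R"

definition conj_diag :: "(nat \<Rightarrow> complex) \<Rightarrow> nat \<Rightarrow> complex" where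
  "conj_diag x i = (if i < D then of_real (c^2) * x i + of_real (s^2) * x (flip i) else x i)"

definition conj_off :: "(nat \<Rightarrow> complex) \<Rightarrow> nat \<Rightarrow> complex" where
  "conj_off x i = (if i < D then of_int (flip_sign i) * of_real (c * s) * (x (flip i) - x i) else 0)"

lemma involution_flip: "involution_below N flip"
  using involution_below_flip[OF D_le_N] .

lemma sum_below_D: "(\<Sum>i<N. if i < D then f i else 0) = (\<Sum>i<D. f i)"
proof -
  have "{..<N} \<inter> {i. i < D} = {..<D}" using D_le_N by auto
  then show ?thesis by (simp add: sum.If_cases)
qed

lemma carrier_mats [simp]: "R \<in> carrier_mat N N" "A \<in> carrier_mat N N" "P \<in> carrier_mat N N" "B \<in> carrier_mat N N"
  by (simp_all add: R_def A_def P_def B_def mult_carrier_mat[of _ N N _ N])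

lemma cadj_R: "cadj R = pair_mat N flip rot_diag (\<lambda>i. rot_off (flip i))"
  unfolding R_def cadj_pair_mat[OF involution_flip]
  by (rule pair_mat_cong) (auto simp: rot_diag_def rot_off_def flip_above)

lemma R_cadj_R: "R * cadj R = 1\<^sub>m N"
proof -
  have cs: "complex_of_real c * of_real c + of_real s * of_real s = 1"
    using cos_sin by (simp add: power2_eq_square flip: of_real_mult of_real_add)
  have "R * cadj R = pair_mat N flip
      (\<lambda>i. rot_diag i * rot_diag i + rot_off i * rot_off (flip (flip i)))
      (\<lambda>i. rot_diag i * rot_off (flip i) + rot_off i * rot_diag (flip i))"
    unfolding cadj_R by (simp only: R_def pair_mat_mult[OF involution_flip])
  also have "\<dots> = pair_mat N flip (\<lambda>_. 1) (\<lambda>_. 0)"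
  proof (rule pair_mat_cong)
    fix i
    show "rot_diag i * rot_diag i + rot_off i * rot_off (flip (flip i)) = 1"
      using cs flip_sign_cases[of i] by (auto simp: rot_diag_def rot_off_def flip_flip)
    show "rot_diag i * rot_off (flip i) + rot_off i * rot_diag (flip i) = 0"
      using flip_less[of i] flip_sign_flip[of i]
      by (cases "i < D") (auto simp: rot_diag_def rot_off_def flip_above)
  qed
  finally show ?thesis by (simp flip: mat_diag_eq_pair_mat)
qed

lemma unitary_B: "unitary_mat N B"
proof -
  have "unitary_mat N (cadj R)"
    by (rule unitary_matI) (simp_all add: cadj_cadj R_cadj_R)
  moreover have "unitary_mat N P"
    unfolding P_def using shift_below[OF D_le_N] inj_on_shift by (rule unitary_perm_mat)
  ultimately show ?thesis unfolding B_def by (rule unitary_mat_mult[rotated])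
qed

lemma unitary_A: "unitary_mat N A"
  unfolding A_def by (rule unitary_mat_diag) simp

lemma conj_B_diag: "mat_inv B * mat_diag N x * B = R * mat_diag N (\<lambda>i. x (shift i)) * cadj R"
proof -
  have "mat_inv B = R * cadj P"
    using mat_inv_unitary[OF unitary_B] by (simp add: B_def cadj_mult[of _ N N _ N] cadj_cadj)
  then have "mat_inv B * mat_diag N x * B = R * (cadj P * mat_diag N x * P) * cadj R"
    by (simp add: B_def assoc_mult_mat[of _ N N _ N _ N] mult_carrier_mat[of _ N N _ N])
  also have "cadj P * mat_diag N x * P = mat_diag N (\<lambda>i. x (shift i))"
    unfolding P_def using shift_below[OF D_le_N] inj_on_shift by (rule perm_mat_conj_diag)
  finally show ?thesis .
qed

lemma R_conj_diag: "R * mat_diag N x * cadj R = pair_mat N flip (conj_diag x) (conj_off x)"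
proof -
  have "R * mat_diag N x = pair_mat N flip (\<lambda>i. rot_diag i * x i) (\<lambda>i. rot_off i * x (flip i))"
    unfolding R_def mat_diag_eq_pair_mat[of N x flip] pair_mat_mult[OF involution_flip] by simp
  then have "R * mat_diag N x * cadj R
      = pair_mat N flip (\<lambda>i. rot_diag i * x i) (\<lambda>i. rot_off i * x (flip i)) * cadj R"
    by simp
  also have "\<dots> = pair_mat N flip
      (\<lambda>i. rot_diag i * x i * rot_diag i + rot_off i * x (flip i) * rot_off (flip (flip i)))
      (\<lambda>i. rot_diag i * x i * rot_off (flip i) + rot_off i * x (flip i) * rot_diag (flip i))"
    unfolding cadj_R by (rule pair_mat_mult[OF involution_flip])
  also have "\<dots> = pair_mat N flip (conj_diag x) (conj_off x)"
  proof (rule pair_mat_cong)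
    fix i
    have sq: "(of_int (flip_sign i) :: complex) * of_int (flip_sign i) = 1"
      using flip_sign_cases[of i] by auto
    show "rot_diag i * x i * rot_diag i + rot_off i * x (flip i) * rot_off (flip (flip i)) = conj_diag x i"
    proof (cases "i < D")
      case True
      have "rot_diag i * x i * rot_diag i + rot_off i * x (flip i) * rot_off (flip (flip i))
          = of_real c * of_real c * x i + (of_int (flip_sign i) * of_int (flip_sign i)) * (of_real s * of_real s) * x (flip i)"
        using True by (simp add: rot_diag_def rot_off_def flip_flip algebra_simps)
      then show ?thesis using True sq by (simp add: conj_diag_def power2_eq_square)
    qed (simp add: rot_diag_def rot_off_def conj_diag_def flip_above)
    show "rot_diag i * x i * rot_off (flip i) + rot_off i * x (flip i) * rot_diag (flip i) = conj_off x i"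
    proof (cases "i < D")
      case True
      then show ?thesis using flip_less[OF True] flip_sign_flip[OF True]
        by (simp add: rot_diag_def rot_off_def conj_off_def algebra_simps)
    qed (simp add: rot_diag_def rot_off_def conj_off_def flip_above)
  qed
  finally show ?thesis .
qed

lemma bs_relator_eq:
  "mat_inv B * (A * A) * B - A * A * A
     = pair_mat N flip (\<lambda>i. conj_diag (\<lambda>i. eig i ^ 3) i - eig i ^ 3) (conj_off (\<lambda>i. eig i ^ 3))"
proof -
  have AA: "A * A = mat_diag N (\<lambda>i. eig i * eig i)"
    and AAA: "A * A * A = mat_diag N (\<lambda>i. eig i ^ 3)"
    by (simp_all add: A_def power3_eq_cube mult.assoc)
  have "mat_inv B * (A * A) * B = R * mat_diag N (\<lambda>i. eig (shift i) * eig (shift i)) * cadj R"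
    unfolding AA by (rule conj_B_diag)
  also have "(\<lambda>i. eig (shift i) * eig (shift i)) = (\<lambda>i. eig i ^ 3)"
    using eig_shift_squared by (simp add: power2_eq_square)
  finally show ?thesis
    unfolding AAA R_conj_diag by (simp add: mat_diag_eq_pair_mat[of N _ flip] pair_mat_minus)
qed

lemma norm_conj_entries:
  "(cmod (conj_diag x i - x i))^2 + (cmod (conj_off x i))^2
     = (if i < D then s^2 * (cmod (x (flip i) - x i))^2 else 0)"
proof (cases "i < D")
  case True
  have "(complex_of_real c)^2 + (complex_of_real s)^2 = 1"
    using arg_cong[OF cos_sin, of complex_of_real] by simp
  then have csq: "(complex_of_real c)^2 = 1 - (complex_of_real s)^2"
    by (simp add: eq_diff_eq)
  have diag: "conj_diag x i - x i = of_real (s^2) * (x (flip i) - x i)"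
    using True by (simp add: conj_diag_def algebra_simps csq)
  have off: "conj_off x i = of_int (flip_sign i) * of_real (c * s) * (x (flip i) - x i)"
    using True by (simp add: conj_off_def)
  have "cmod (of_int (flip_sign i) :: complex) = 1"
    using flip_sign_cases[of i] by auto
  then have "(cmod (of_real (s^2) * z))^2 + (cmod (of_int (flip_sign i) * of_real (c * s) * z))^2
      = s^2 * (s^2 + c^2) * (cmod z)^2" for z :: complex
    by (simp add: norm_mult norm_power power_mult_distrib algebra_simps flip: power_mult)
  then show ?thesis unfolding diag off using True cos_sin by simp
qed (simp add: conj_diag_def conj_off_def)

lemma bs_relator_defect_le: "bs_relator_defect A B \<le> sqrt D * (8 / q)"
proof -
  let ?x = "\<lambda>i. eig i ^ 3"
  let ?z = "\<lambda>i. eig (flip i) ^ 3 - eig i ^ 3"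
  have "bs_relator_defect A B = sqrt (\<Sum>i<N. (cmod (conj_diag ?x i - ?x i))^2 + (cmod (conj_off ?x i))^2)"
    unfolding bs_relator_defect_def bs_relator_eq
    by (rule frob_pair_mat[OF involution_flip]) (auto simp: conj_off_def flip_neq)
  also have "\<dots> = sqrt (\<Sum>i<N. if i < D then s^2 * (cmod (?z i))^2 else 0)"
    by (simp only: norm_conj_entries[of "\<lambda>i. eig i ^ 3"])
  also have "\<dots> \<le> sqrt (\<Sum>i<N. if i < D then (8 / q)^2 else 0)"
  proof (intro real_sqrt_le_mono sum_mono)
    fix i
    have "s^2 \<le> 1" using cos_sin by (smt (verit) zero_le_power2)
    then have "s^2 * (cmod (?z i))^2 \<le> 1 * (8 / q)^2" if "i < D"
      using cmod_eig_cube_flip_diff[OF that] cube_flip_gap_le by (intro mult_mono) auto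
    then show "(if i < D then s^2 * (cmod (?z i))^2 else 0) \<le> (if i < D then (8 / q)^2 else 0)"
      by simp
  qed
  also have "\<dots> = sqrt (D * (8 / q)^2)"
    by (simp add: sum_below_D)
  also have "\<dots> = sqrt D * (8 / q)"
    using q_pos by (simp add: real_sqrt_mult)
  finally show ?thesis .
qed

lemma commutator_defect_eq: "commutator_defect A B = sqrt (D * (c^2 * s^2 * alpha * beta))"
proof -
  let ?y = "\<lambda>i. eig (shift i)"
  let ?f = "\<lambda>i. conj_off ?y i * (eig i - eig (flip i))"
  have C: "mat_inv B * A * B = pair_mat N flip (conj_diag ?y) (conj_off ?y)"
    by (simp add: A_def conj_B_diag R_conj_diag)
  have "A * mat_inv B * A * B - mat_inv B * A * B * A = A * (mat_inv B * A * B) - (mat_inv B * A * B) * A"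
    by (simp add: assoc_mult_mat[of _ N N _ N _ N] mult_carrier_mat[of _ N N _ N] mat_inv_unitary[OF unitary_B])
  also have "\<dots> = pair_mat N flip (\<lambda>_. 0) ?f"
    unfolding C unfolding A_def mat_diag_eq_pair_mat[of N _ flip] pair_mat_mult[OF involution_flip] pair_mat_minus
    by (rule pair_mat_cong) (simp_all add: algebra_simps)
  finally have "commutator_defect A B = sqrt (\<Sum>i<N. (cmod (?f i))^2)"
    unfolding commutator_defect_def
    by (simp add: frob_pair_mat[OF involution_flip] conj_off_def flip_neq)
  also have "(\<Sum>i<N. (cmod (?f i))^2) = (\<Sum>i<N. if i < D then c^2 * s^2 * alpha * beta else 0)"
  proof (rule sum.cong[OF refl])
    fix i
    show "(cmod (?f i))^2 = (if i < D then c^2 * s^2 * alpha * beta else 0)"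
    proof (cases "i < D")
      case True
      have "cmod (of_int (flip_sign i) :: complex) = 1" using flip_sign_cases[of i] by auto
      moreover have "(cmod (eig i - eig (flip i)))^2 = alpha"
        using cmod_eig_flip_diff[OF True] by (simp add: norm_minus_commute)
      ultimately show ?thesis
        using True cmod_eig_shift_flip_diff[OF True]
        by (simp add: conj_off_def norm_mult power_mult_distrib)
    qed (simp add: conj_off_def)
  qed
  also have "\<dots> = D * (c^2 * s^2 * alpha * beta)"
    by (simp add: sum_below_D)
  finally show ?thesis .
qed

end

lemma exists_cos_sin_product:
  fixes \<mu> :: real
  assumes "0 \<le> \<mu>" "4 * \<mu> \<le> 1"
  shows "\<exists>c s. c^2 + s^2 = 1 \<and> c^2 * s^2 = \<mu>"
proof -
  define r where "r = sqrt (1 - 4 * \<mu>)"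
  have r: "0 \<le> r" "r \<le> 1" "r^2 = 1 - 4 * \<mu>" using assms by (auto simp: r_def)
  have c: "(sqrt ((1 + r) / 2))^2 = (1 + r) / 2" and s: "(sqrt ((1 - r) / 2))^2 = (1 - r) / 2"
    using r(1,2) by simp_all
  show ?thesis
  proof (rule exI[of _ "sqrt ((1 + r) / 2)"], rule exI[of _ "sqrt ((1 - r) / 2)"], rule conjI)
    show "(sqrt ((1 + r) / 2))^2 + (sqrt ((1 - r) / 2))^2 = 1"
      unfolding c s by (simp add: field_simps)
    show "(sqrt ((1 + r) / 2))^2 * (sqrt ((1 - r) / 2))^2 = \<mu>"
      unfolding c s using r(3) by (simp add: power2_eq_square field_simps)
  qed
qed

lemma exists_unitary_pair_at_level:
  fixes L m :: nat
  assumes L: "5 \<le> L" and size: "L * 2^L \<le> 6 * m" and lower: "5 * m \<le> 2 * (L * 2^L)"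
  shows "\<exists>A B. unitary_mat (6 * m) A \<and> unitary_mat (6 * m) B \<and>
     bs_relator_defect A B \<le> sqrt (real (L * 2^L)) * 8 / (3^L - 2^L) \<and>
     commutator_defect A B = sqrt (6 * real m)"
proof -
  interpret bs_phases L using L by unfold_locales simp
  have ab: "14/5 * (19/5) \<le> alpha * beta"
    using alpha_ge[OF L] beta_ge[OF L] by (intro mult_mono) auto
  \<comment> \<open>the value of c^2 s^2 for which the commutator defect is exactly sqrt (6 m)\<close>
  define \<mu> where "\<mu> = 6 * m / (D * (alpha * beta))"
  have pos: "0 < alpha" "0 < beta" "0 < real D"
    using alpha_ge[OF L] beta_ge[OF L] D_pos by simp_all
  then have Dab: "0 < D * (alpha * beta)" by simp
  have "real (5 * m) \<le> real (2 * D)"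
    using lower unfolding D_def by (simp only: of_nat_le_iff)
  then have "24 * real m \<le> D * (alpha * beta)"
    using mult_left_mono[OF ab, of "real D"] by simp
  moreover have "4 * \<mu> = 24 * real m / (D * (alpha * beta))"
    by (simp add: \<mu>_def)
  ultimately have "4 * \<mu> \<le> 1"
    using Dab by (simp add: pos_divide_le_eq)
  moreover have "0 \<le> \<mu>"
    using Dab by (simp add: \<mu>_def)
  ultimately obtain c s where cs: "c^2 + s^2 = 1" "c^2 * s^2 = \<mu>"
    using exists_cos_sin_product by blast
  interpret bs_matrices L "6 * m" c s
    using size cs(1) by unfold_locales (simp_all add: D_def)
  have "D * (c^2 * s^2 * alpha * beta) = (D * (alpha * beta)) * \<mu>"
    by (simp only: cs(2)) (simp add: algebra_simps)
  also have "\<dots> = 6 * m"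
    using pos by (simp add: \<mu>_def)
  finally have "commutator_defect A B = sqrt (6 * real m)"
    by (simp add: commutator_defect_eq)
  moreover have "bs_relator_defect A B \<le> sqrt (real (L * 2^L)) * 8 / (3^L - 2^L)"
    using bs_relator_defect_le by (simp add: D_def q_def)
  ultimately show ?thesis using unitary_A unitary_B by blast
qed

lemma power_swap: "((a::'a::monoid_mult)^m)^n = (a^n)^m"
  by (simp only: power_mult[symmetric] mult.commute)

lemma eventually_size_cube_le: "eventually (\<lambda>L. (real (L * 2^L))^3 \<le> (3^L - 2^L)^2) at_top"
proof -
  have "((\<lambda>L::nat. (real L)^3 * (8/9)^L) \<longlongrightarrow> 0) at_top" by real_asymp
  then have small: "eventually (\<lambda>L::nat. (real L)^3 * (8/9)^L < 1/9) at_top"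
    by (rule order_tendstoD(2)) simp
  have cube: "(real (L * 2^L))^3 \<le> (3^L - 2^L)^2" if "(real L)^3 * (8/9)^L < 1/9" "1 \<le> L" for L :: nat
  proof -
    have "(2::real)^(L - 1) \<le> 3^(L - 1)" by (rule power_mono) auto
    moreover have "(2::real)^L = 2 * 2^(L - 1)" "(3::real)^L = 3 * 3^(L - 1)"
      using \<open>1 \<le> L\<close> by (simp_all add: power_eq_if[of _ L])
    ultimately have "(3::real)^L / 3 \<le> 3^L - 2^L" by simp
    have "(real (L * 2^L))^3 = ((real L)^3 * (8/9)^L) * 9^L"
      by (simp add: power_mult_distrib power_divide power_swap[of 2 L 3])
    also have "\<dots> \<le> (1/9) * 9^L" using that(1) by (intro mult_right_mono) auto
    also have "\<dots> = ((3::real)^L / 3)^2"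
      by (simp add: power_divide power_swap[of 3 L 2])
    also have "\<dots> \<le> (3^L - 2^L)^2"
      using \<open>(3::real)^L / 3 \<le> 3^L - 2^L\<close> by (intro power_mono) auto
    finally show ?thesis .
  qed
  show ?thesis
    using small eventually_ge_at_top[of 1] by eventually_elim (rule cube)
qed

lemma sqrt_div_le_of_cube_le:
  fixes D Q m :: real
  assumes D: "0 < D" and Q: "0 < Q" and cube: "D^3 \<le> Q^2"
    and m: "0 < m" "2 * m \<le> D"
  shows "sqrt D * 8 / Q \<le> 4 / m"
proof -
  have "(sqrt D * D)^2 = D^3"
    using D by (simp add: power_mult_distrib power3_eq_cube power2_eq_square)
  then have "(sqrt D * D)^2 \<le> Q^2"
    using cube by (simp only:)
  then have root: "sqrt D * D \<le> Q"
    by (rule power2_le_imp_le) (use Q in simp)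
  have "sqrt D * 8 / Q * D = 8 * (sqrt D * D) / Q" by simp
  also have "\<dots> \<le> 8 * Q / Q"
    using root Q by (intro divide_right_mono) auto
  finally have "sqrt D * 8 / Q \<le> 8 / D"
    using D Q by (simp add: le_divide_eq)
  also have "\<dots> \<le> 8 / (2 * m)"
    using D m by (intro divide_left_mono) auto
  finally show ?thesis by simp
qed

definition level :: "nat \<Rightarrow> nat" where "level n = Max {L. L * 2^L \<le> 6 * n}"

lemma level_size_le: "level n * 2^level n \<le> 6 * n"
  and le_level: "K * 2^K \<le> 6 * n \<Longrightarrow> K \<le> level n"
proof -
  have fin: "finite {L. L * 2^L \<le> 6 * n}"
    by (rule finite_subset[of _ "{..6 * n}"]) (auto intro: order_trans[rotated])
  have "0 \<in> {L. L * 2^L \<le> 6 * n}" by simp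
  then have "level n \<in> {L. L * 2^L \<le> 6 * n}"
    unfolding level_def by (intro Max_in[OF fin]) blast
  then show "level n * 2^level n \<le> 6 * n" by simp
  show "K * 2^K \<le> 6 * n \<Longrightarrow> K \<le> level n"
    unfolding level_def using fin by auto
qed

lemma level_size_lower: "5 \<le> level n \<Longrightarrow> 5 * n \<le> 2 * (level n * 2^level n)"
proof -
  assume L: "5 \<le> level n"
  have "\<not> Suc (level n) * 2^Suc (level n) \<le> 6 * n"
    using le_level[of "Suc (level n)" n] by auto
  then have "6 * n < 2 * (level n * 2^level n) + 2 * 2^level n" by simp
  moreover have "5 * 2^level n \<le> level n * 2^level n" using L by simp
  ultimately show ?thesis by linarith
qed

lemma eventually_ge_nonprincipal_ultrafilter:
  assumes U: "is_ultrafilter U" and np: "nonprincipal U"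
  shows "eventually (\<lambda>n. N0 \<le> n) U"
proof (rule ccontr)
  have proper: "\<not> eventually (\<lambda>_. False) U" using U by (simp add: is_ultrafilter_def)
  assume "\<not> eventually (\<lambda>n. N0 \<le> n) U"
  then have below: "eventually (\<lambda>n. n < N0) U"
    using U unfolding is_ultrafilter_def by (auto simp: not_le)
  have "\<exists>m<N0. eventually (\<lambda>n. n = m) U"
  proof (rule ccontr)
    assume "\<not> ?thesis"
    then have "\<forall>m\<in>{..<N0}. eventually (\<lambda>n. n \<noteq> m) U"
      using U unfolding is_ultrafilter_def by blast
    then have "eventually (\<lambda>n. \<forall>m\<in>{..<N0}. n \<noteq> m) U"
      by (rule eventually_ball_finite[OF finite_lessThan])
    with below have "eventually (\<lambda>_. False) U" by eventually_elim auto
    with proper show False ..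
  qed
  then obtain m where m: "eventually (\<lambda>n. n = m) U" by blast
  have "U = principal {m}"
  proof (rule antisym)
    show "U \<le> principal {m}" using m by (simp add: le_principal)
    show "principal {m} \<le> U"
    proof (rule filter_leI)
      fix P assume "eventually P U"
      with m have mP: "eventually (\<lambda>n. n = m \<and> P n) U" by eventually_elim simp
      have "P m"
      proof (rule ccontr)
        assume "\<not> P m"
        with mP have "eventually (\<lambda>_. False) U" by (auto elim: eventually_mono)
        with proper show False ..
      qed
      then show "eventually P (principal {m})" by (simp add: eventually_principal)
    qed
  qed
  with np show False by (simp add: nonprincipal_def)
qed

lemma exists_unitary_pairs_for_large_n:
  "\<exists>N0. \<forall>n\<ge>N0. \<exists>A B. unitary_mat (6 * n) A \<and> unitary_mat (6 * n) B \<and>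
     bs_relator_defect A B \<le> 4 / real n \<and> commutator_defect A B = sqrt (6 * real n)"
proof -
  obtain L0 where L0: "\<And>L. L0 \<le> L \<Longrightarrow> (real (L * 2^L))^3 \<le> (3^L - 2^L)^2"
    using eventually_size_cube_le by (auto simp: eventually_at_top_linorder)
  define K where "K = max 5 L0"
  show ?thesis
  proof (intro exI[of _ "K * 2^K"] allI impI)
    fix n assume n: "K * 2^K \<le> n"
    define L where "L = level n"
    have "K \<le> L" using le_level[of K n] n unfolding L_def by simp
    then have L: "5 \<le> L" "L0 \<le> L" by (auto simp: K_def)
    have "0 < K * 2^K" by (simp add: K_def)
    then have "0 < n" using n by (rule less_le_trans)
    obtain A B where AB: "unitary_mat (6 * n) A" "unitary_mat (6 * n) B"
        "bs_relator_defect A B \<le> sqrt (real (L * 2^L)) * 8 / (3^L - 2^L)"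
        "commutator_defect A B = sqrt (6 * real n)"
      using exists_unitary_pair_at_level[OF L(1)] level_size_le level_size_lower L(1)
      unfolding L_def by blast
    have "sqrt (real (L * 2^L)) * 8 / (3^L - 2^L) \<le> 4 / real n"
    proof (rule sqrt_div_le_of_cube_le)
      have "(2::real)^L < 3^L" using L by (intro power_strict_mono) auto
      then show "0 < (3::real)^L - 2^L" by simp
      have "5 * n \<le> 2 * (L * 2^L)" using level_size_lower L(1) unfolding L_def by blast
      then show "2 * real n \<le> real (L * 2^L)" by linarith
    qed (use L0[OF L(2)] L \<open>0 < n\<close> in auto)
    then show "\<exists>A B. unitary_mat (6 * n) A \<and> unitary_mat (6 * n) B \<and>
        bs_relator_defect A B \<le> 4 / real n \<and> commutator_defect A B = sqrt (6 * real n)"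
      using AB(1,2,4) order_trans[OF AB(3)] by blast
  qed
qed

theorem lemma2p4:
  fixes U :: "nat filter"
  assumes "is_ultrafilter U" and "nonprincipal U"
  shows "\<exists>A B :: nat \<Rightarrow> complex mat.
     (\<forall>n. unitary_mat (6*n) (A n) \<and> unitary_mat (6*n) (B n)) \<and>
     bigO_U U (\<lambda>n. frob (mat_inv (B n) * (A n * A n) * B n - A n * A n * A n))
              (\<lambda>n. 1 / real n) \<and>
     bigO_U U (\<lambda>n. \<bar>frob (A n * mat_inv (B n) * A n * B n - mat_inv (B n) * A n * B n * A n)
                     - sqrt (6 * real n)\<bar>)
              (\<lambda>n. 1)"
proof -
  obtain N0 where good: "\<And>n. N0 \<le> n \<Longrightarrow> \<exists>A B. unitary_mat (6 * n) A \<and> unitary_mat (6 * n) B \<and>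
      bs_relator_defect A B \<le> 4 / real n \<and> commutator_defect A B = sqrt (6 * real n)"
    using exists_unitary_pairs_for_large_n by blast
  have "\<exists>A B. unitary_mat (6 * n) A \<and> unitary_mat (6 * n) B \<and> (N0 \<le> n \<longrightarrow>
      bs_relator_defect A B \<le> 4 / real n \<and> commutator_defect A B = sqrt (6 * real n))" for n
    using good[of n] unitary_mat_one by (cases "N0 \<le> n") blast+
  then obtain A B where AB: "\<And>n. unitary_mat (6 * n) (A n) \<and> unitary_mat (6 * n) (B n) \<and> (N0 \<le> n \<longrightarrow>
      bs_relator_defect (A n) (B n) \<le> 4 / real n \<and> commutator_defect (A n) (B n) = sqrt (6 * real n))"
    by metis
  have "eventually (\<lambda>n. N0 \<le> n) U"
    using assms by (rule eventually_ge_nonprincipal_ultrafilter)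
  then have "eventually (\<lambda>n. bs_relator_defect (A n) (B n) \<le> 4 * (1 / real n)) U"
    and "eventually (\<lambda>n. \<bar>commutator_defect (A n) (B n) - sqrt (6 * real n)\<bar> \<le> 1 * 1) U"
    by (eventually_elim, use AB in simp)+
  then show ?thesis
    unfolding bigO_U_def bs_relator_defect_def commutator_defect_def
    using AB by (intro exI[of _ A] exI[of _ B] conjI allI exI[of _ "4::real"] exI[of _ "1::real"]) auto
qed

end
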